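(* Let $\underline{L}$ be a finite lattice and $\underline{S}=[u,v]$ an interval of $\underline{L}$. If $\underline{S}$ is quasi-dismantling for $\underline{L}$, then $\underline{L}\setminus\underline{S}$ (the set $L\setminus S$ with the restricted order) is a lattice; in particular, $L\setminus S$ is a sublattice of $\underline{L}$, i.e. for all $a,b\in L\setminus S$ the join $a\vee b$ and meet $a\wedge b$ computed in $\underline{L}$ lie in $L\setminus S$.
   Context: For $u\le v$ in a lattice $L$, $[u,v]=\{x\mid u\le x\le v\}$, $(v]=\{x\mid x\le v\}$, $[u)=\{x\mid u\le x\}$. An interval $[u,v]$ of $L$ is quasi-dismantling for $L$ if $u$ is supremum-prime in $(v]$ (for all $x,y\in(v]$, $u\le x\vee y$ implies $u\le x$ or $u\le y$) and $v$ is infimum-prime in $[u)$ (for all $x,y\in[u)$, $x\wedge y\le v$ implies $x\le v$ or $y\le v$). *)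

theory Defs
  imports Main
begin

definition sup_prime_in_downset :: "'a::lattice \<Rightarrow> 'a \<Rightarrow> bool" where
  "sup_prime_in_downset u v \<longleftrightarrow>
     (\<forall>x y. x \<le> v \<longrightarrow> y \<le> v \<longrightarrow> u \<le> sup x y \<longrightarrow> u \<le> x \<or> u \<le> y)"

definition inf_prime_in_upset :: "'a::lattice \<Rightarrow> 'a \<Rightarrow> bool" where
  "inf_prime_in_upset v u \<longleftrightarrow>
     (\<forall>x y. u \<le> x \<longrightarrow> u \<le> y \<longrightarrow> inf x y \<le> v \<longrightarrow> x \<le> v \<or> y \<le> v)"

definition quasi_dismantling :: "'a::lattice \<Rightarrow> 'a \<Rightarrow> bool" where
  "quasi_dismantling u v \<longleftrightarrow> u \<le> v \<and> sup_prime_in_downset u v \<and> inf_prime_in_upset v u"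

end

theory Submission
  imports Defs
begin

lemma sup_notin_atLeastAtMost_if_sup_prime:
  fixes u v a b :: "'a::lattice"
  assumes "sup_prime_in_downset u v" and "a \<notin> {u..v}" and "b \<notin> {u..v}"
  shows "sup a b \<notin> {u..v}"
proof
  assume "sup a b \<in> {u..v}"
  then have "a \<le> v" "b \<le> v" "u \<le> sup a b"
    by auto
  with assms(1) have "u \<le> a \<or> u \<le> b"
    unfolding sup_prime_in_downset_def by blast
  with assms(2,3) \<open>a \<le> v\<close> \<open>b \<le> v\<close> show False
    by auto
qed

lemma inf_notin_atLeastAtMost_if_inf_prime:
  fixes u v a b :: "'a::lattice"
  assumes "inf_prime_in_upset v u" and "a \<notin> {u..v}" and "b \<notin> {u..v}"
  shows "inf a b \<notin> {u..v}"
proof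
  assume "inf a b \<in> {u..v}"
  then have "u \<le> a" "u \<le> b" "inf a b \<le> v"
    by auto
  with assms(1) have "a \<le> v \<or> b \<le> v"
    unfolding inf_prime_in_upset_def by blast
  with assms(2,3) \<open>u \<le> a\<close> \<open>u \<le> b\<close> show False
    by auto
qed

theorem lemma3:
  fixes u v :: "'a::{finite, lattice}"
  assumes "u \<le> v" and "quasi_dismantling u v"
  shows "\<forall>a b. a \<notin> {u..v} \<longrightarrow> b \<notin> {u..v} \<longrightarrow>
           sup a b \<notin> {u..v} \<and> inf a b \<notin> {u..v}"
proof -
  from assms(2) have "sup_prime_in_downset u v" and "inf_prime_in_upset v u"
    unfolding quasi_dismantling_def by auto
  then show ?thesis
    using sup_notin_atLeastAtMost_if_sup_prime inf_notin_atLeastAtMost_if_inf_prime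
    by blast
qed

end
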